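(* Let $G\leq\mathrm{Sym}(m)$ and $H\leq\mathrm{Sym}(n)$ both have the EKR property (for their natural actions). Then the wreath product $G\wr H$, acting on $\{1,\dots,m\}\times\{1,\dots,n\}$ by $(x,j)^{(g_1,\dots,g_n,h)}=(g_j(x),h(j))$, has the EKR property.
   Context: The wreath product $G\wr H$ has underlying set $G^n\times H$ with multiplication $(g_1,\dots,g_n,h)(g'_1,\dots,g'_n,h')=(g_1g'_{h(1)},\dots,g_ng'_{h(n)},hh')$. For a permutation group acting on a finite set: two elements $\pi,\tau$ intersect if $\pi\tau^{-1}$ has a fixed point; a subset is intersecting if every pair intersects; the group has the EKR property if every intersecting subset has size at most the size of the largest point-stabilizer. *)

theory Defs
  imports "HOL-Combinatorics.Permutations"
begin

definition perm_group :: "'a set \<Rightarrow> ('a \<Rightarrow> 'a) set \<Rightarrow> bool" where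
  "perm_group \<Omega> G \<longleftrightarrow> G \<noteq> {} \<and> (\<forall>g\<in>G. g permutes \<Omega>)
     \<and> (\<forall>g\<in>G. \<forall>h\<in>G. g \<circ> h \<in> G) \<and> (\<forall>g\<in>G. inv g \<in> G)"

definition perms_intersect :: "'a set \<Rightarrow> ('a \<Rightarrow> 'a) \<Rightarrow> ('a \<Rightarrow> 'a) \<Rightarrow> bool" where
  "perms_intersect \<Omega> \<pi> \<tau> \<longleftrightarrow> (\<exists>x\<in>\<Omega>. (\<pi> \<circ> inv \<tau>) x = x)"

definition intersecting :: "'a set \<Rightarrow> ('a \<Rightarrow> 'a) set \<Rightarrow> bool" where
  "intersecting \<Omega> S \<longleftrightarrow> (\<forall>\<pi>\<in>S. \<forall>\<tau>\<in>S. \<pi> \<noteq> \<tau> \<longrightarrow> perms_intersect \<Omega> \<pi> \<tau>)"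

definition stabilizer :: "('a \<Rightarrow> 'a) set \<Rightarrow> 'a \<Rightarrow> ('a \<Rightarrow> 'a) set" where
  "stabilizer G x = {g\<in>G. g x = x}"

text \<open>Size of the largest point stabilizer (0 if \<open>\<Omega>\<close> is empty).\<close>
definition max_stab :: "'a set \<Rightarrow> ('a \<Rightarrow> 'a) set \<Rightarrow> nat" where
  "max_stab \<Omega> G = Max (insert 0 ((\<lambda>x. card (stabilizer G x)) ` \<Omega>))"

definition EKR :: "'a set \<Rightarrow> ('a \<Rightarrow> 'a) set \<Rightarrow> bool" where
  "EKR \<Omega> G \<longleftrightarrow> (\<forall>S\<subseteq>G. intersecting \<Omega> S \<longrightarrow> card S \<le> max_stab \<Omega> G)"

text \<open>The permutation of \<open>{0..<m} \<times> {0..<n}\<close> induced by \<open>(g\<^sub>0,\<dots>,g\<^sub>n\<^sub>-\<^sub>1,h)\<close>: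
  \<open>(x,j) \<mapsto> (g\<^sub>j x, h j)\<close>, identity outside the domain.\<close>
definition wreath_perm :: "nat \<Rightarrow> nat \<Rightarrow> (nat \<Rightarrow> nat \<Rightarrow> nat) \<Rightarrow> (nat \<Rightarrow> nat) \<Rightarrow> (nat \<times> nat \<Rightarrow> nat \<times> nat)" where
  "wreath_perm m n g h = (\<lambda>(x, j). if x < m \<and> j < n then (g j x, h j) else (x, j))"

definition wreath :: "nat \<Rightarrow> nat \<Rightarrow> (nat \<Rightarrow> nat) set \<Rightarrow> (nat \<Rightarrow> nat) set \<Rightarrow> (nat \<times> nat \<Rightarrow> nat \<times> nat) set" where
  "wreath m n G H = {wreath_perm m n g h | g h. (\<forall>j<n. g j \<in> G) \<and> h \<in> H}"

end

theory Submission
  imports Defs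
begin

text \<open>
  The elements \<open>(a, \<dots>, a, k)\<close> with \<open>a \<in> G\<close>, \<open>k \<in> H\<close> form a copy \<open>D\<close> of \<open>G \<times> H\<close>
  inside the wreath product \<open>W\<close>. Let \<open>S \<subseteq> W\<close> be intersecting and \<open>t \<in> W\<close>. If two
  distinct elements \<open>(a, \<dots>, a, k) t\<close> and \<open>(b, \<dots>, b, l) t\<close> of \<open>S\<close> agree at a point
  \<open>q\<close>, then \<open>(a, \<dots>, a, k)\<close> and \<open>(b, \<dots>, b, l)\<close> agree at \<open>t q = (x, i)\<close>, so
  \<open>a x = b x\<close> and \<open>k i = l i\<close>. Hence the \<open>H\<close>-parts of \<open>D t \<inter> S\<close> form an intersecting
  set, as do the \<open>G\<close>-parts over each fixed \<open>k\<close>, and the EKR property of \<open>G\<close> and \<open>H\<close>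
  bounds \<open>|D t \<inter> S|\<close> by \<open>s\<^sub>G s\<^sub>H\<close>, the product of the largest stabilizer orders.
  Summing over all \<open>t \<in> W\<close> counts every element of \<open>S\<close> exactly \<open>|D|\<close> times, so
  \<open>|G| |H| |S| \<le> |W| s\<^sub>G s\<^sub>H = |G|\<^sup>n |H| s\<^sub>G s\<^sub>H\<close>, and this is \<open>|G| |H|\<close> times the
  order of the stabilizer in \<open>W\<close> of a suitable point \<open>(x\<^sub>0, j\<^sub>0)\<close>.
\<close>

lemma perm_group_permutes: "perm_group \<Omega> G \<Longrightarrow> g \<in> G \<Longrightarrow> g permutes \<Omega>"
  unfolding perm_group_def by blast

lemma perm_group_comp: "perm_group \<Omega> G \<Longrightarrow> g \<in> G \<Longrightarrow> h \<in> G \<Longrightarrow> g \<circ> h \<in> G"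
  unfolding perm_group_def by blast

lemma perm_group_nonempty: "perm_group \<Omega> G \<Longrightarrow> G \<noteq> {}"
  unfolding perm_group_def by blast

lemma perm_group_finite: "perm_group \<Omega> G \<Longrightarrow> finite \<Omega> \<Longrightarrow> finite G"
  by (rule finite_subset[OF _ finite_permutations]) (auto dest: perm_group_permutes)

lemma perm_group_fixes: "perm_group \<Omega> G \<Longrightarrow> g \<in> G \<Longrightarrow> x \<notin> \<Omega> \<Longrightarrow> g x = x"
  by (meson perm_group_permutes permutes_not_in)

lemma perm_group_closed_lessThan:
  fixes m :: nat
  assumes "perm_group {0..<m} G" "g \<in> G" "x < m"
  shows "g x < m"
  using permutes_in_image[OF perm_group_permutes[OF assms(1,2)], of x] assms(3) by auto

lemma perms_intersect_iff:
  assumes "\<tau> permutes \<Omega>"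
  shows "perms_intersect \<Omega> \<sigma> \<tau> \<longleftrightarrow> (\<exists>x\<in>\<Omega>. \<sigma> x = \<tau> x)"
proof -
  have "perms_intersect \<Omega> \<sigma> \<tau> \<longleftrightarrow> (\<exists>y\<in>\<tau> ` \<Omega>. \<sigma> (inv \<tau> y) = y)"
    unfolding perms_intersect_def permutes_image[OF assms] by simp
  also have "\<dots> \<longleftrightarrow> (\<exists>x\<in>\<Omega>. \<sigma> x = \<tau> x)"
    using permutes_inverses(2)[OF assms] by auto
  finally show ?thesis .
qed

lemma EKR_domain_nonempty:
  assumes "perm_group \<Omega> G" "EKR \<Omega> G"
  shows "\<Omega> \<noteq> {}"
proof
  assume "\<Omega> = {}"
  then have "max_stab \<Omega> G = 0" unfolding max_stab_def by simp
  obtain g where "g \<in> G" using perm_group_nonempty[OF assms(1)] by blast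
  then have "card {g} \<le> max_stab \<Omega> G"
    using assms(2) unfolding EKR_def intersecting_def by blast
  with \<open>max_stab \<Omega> G = 0\<close> show False by simp
qed

lemma max_stab_attained:
  assumes "finite \<Omega>" "\<Omega> \<noteq> {}"
  obtains x where "x \<in> \<Omega>" "max_stab \<Omega> G = card (stabilizer G x)"
proof -
  have "max_stab \<Omega> G = Max ((\<lambda>x. card (stabilizer G x)) ` \<Omega>)"
    unfolding max_stab_def using assms by simp
  also have "\<dots> \<in> (\<lambda>x. card (stabilizer G x)) ` \<Omega>"
    by (rule Max_in) (use assms in auto)
  finally show ?thesis using that by blast
qed

lemma card_stabilizer_le_max_stab:
  "finite \<Omega> \<Longrightarrow> x \<in> \<Omega> \<Longrightarrow> card (stabilizer G x) \<le> max_stab \<Omega> G"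
  unfolding max_stab_def by (rule Max_ge) auto

lemma card_le_mult_by_fibres:
  assumes "finite A" "card (snd ` A) \<le> p" "\<And>y. card {x. (x, y) \<in> A} \<le> q"
  shows "card A \<le> q * p"
proof -
  have fibre: "card {z \<in> A. snd z = y} = card {x. (x, y) \<in> A}" for y
  proof -
    have "{z \<in> A. snd z = y} = (\<lambda>x. (x, y)) ` {x. (x, y) \<in> A}" by force
    then show ?thesis by (simp add: card_image inj_on_def)
  qed
  have "A = (\<Union>y\<in>snd ` A. {z \<in> A. snd z = y})" by auto
  then have "card A \<le> (\<Sum>y\<in>snd ` A. card {z \<in> A. snd z = y})"
    by (metis card_UN_le finite_imageI assms(1))
  also have "\<dots> \<le> (\<Sum>y\<in>snd ` A. q)" by (rule sum_mono) (simp add: fibre assms(3))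
  also have "\<dots> \<le> q * p" using assms(2) by (simp add: mult.commute)
  finally show ?thesis .
qed

text \<open>The agreement hypothesis says that \<open>A\<close> is intersecting for the product action
  of \<open>G \<times> H\<close> on \<open>\<Omega> \<times> \<Delta>\<close>.\<close>

lemma card_doubly_intersecting_le:
  assumes G: "perm_group \<Omega> G" "finite \<Omega>" "EKR \<Omega> G"
    and H: "perm_group \<Delta> H" "finite \<Delta>" "EKR \<Delta> H"
    and A: "A \<subseteq> G \<times> H"
    and agree: "\<And>a k b l. (a, k) \<in> A \<Longrightarrow> (b, l) \<in> A \<Longrightarrow> (a, k) \<noteq> (b, l) \<Longrightarrow>
                  (\<exists>x\<in>\<Omega>. a x = b x) \<and> (\<exists>i\<in>\<Delta>. k i = l i)"
  shows "card A \<le> max_stab \<Omega> G * max_stab \<Delta> H"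
proof (rule card_le_mult_by_fibres)
  show "finite A"
    using A perm_group_finite[OF G(1,2)] perm_group_finite[OF H(1,2)] finite_subset by blast
  have "intersecting \<Delta> (snd ` A)"
    unfolding intersecting_def
  proof (intro ballI impI)
    fix k l assume "k \<in> snd ` A" "l \<in> snd ` A" "k \<noteq> l"
    then obtain a b where "(a, k) \<in> A" "(b, l) \<in> A" by force
    with \<open>k \<noteq> l\<close> obtain i where "i \<in> \<Delta>" "k i = l i" using agree by blast
    moreover have "l permutes \<Delta>" using A \<open>(b, l) \<in> A\<close> perm_group_permutes[OF H(1)] by blast
    ultimately show "perms_intersect \<Delta> k l" by (auto simp: perms_intersect_iff)
  qed
  moreover have "snd ` A \<subseteq> H" using A by auto
  ultimately show "card (snd ` A) \<le> max_stab \<Delta> H" using H(3) unfolding EKR_def by blast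
  fix k
  have "intersecting \<Omega> {a. (a, k) \<in> A}"
    unfolding intersecting_def
  proof (intro ballI impI)
    fix a b assume "a \<in> {a. (a, k) \<in> A}" "b \<in> {a. (a, k) \<in> A}" "a \<noteq> b"
    then obtain x where "x \<in> \<Omega>" "a x = b x" using agree by blast
    moreover have "b permutes \<Omega>"
      using A \<open>b \<in> {a. (a, k) \<in> A}\<close> perm_group_permutes[OF G(1)] by blast
    ultimately show "perms_intersect \<Omega> a b" by (auto simp: perms_intersect_iff)
  qed
  moreover have "{a. (a, k) \<in> A} \<subseteq> G" using A by auto
  ultimately show "card {a. (a, k) \<in> A} \<le> max_stab \<Omega> G" using G(3) unfolding EKR_def by blast
qed

lemma sum_card_translates_in:
  assumes "finite E" "finite W" "S \<subseteq> W" "\<And>p. p \<in> E \<Longrightarrow> bij_betw (f p) W W"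
  shows "(\<Sum>t\<in>W. card {p \<in> E. f p t \<in> S}) = card E * card S"
proof -
  have "(\<Sum>t\<in>W. card {p \<in> E. f p t \<in> S}) = (\<Sum>p\<in>E. card {t \<in> W. f p t \<in> S})"
    using sum.swap_restrict[OF assms(2,1), of "\<lambda>_ _. 1::nat" "\<lambda>t p. f p t \<in> S"] by simp
  also have "\<dots> = (\<Sum>p\<in>E. card S)"
  proof (rule sum.cong[OF refl])
    fix p assume "p \<in> E"
    then have "inj_on (f p) W" "f p ` W = W" using assms(4) by (auto simp: bij_betw_def)
    with assms(3) have "bij_betw (f p) {t \<in> W. f p t \<in> S} S"
      unfolding bij_betw_def by (auto intro: inj_on_subset)
    then show "card {t \<in> W. f p t \<in> S} = card S" by (rule bij_betw_same_card)
  qed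
  finally show ?thesis by simp
qed

definition wreath_diag :: "nat \<Rightarrow> nat \<Rightarrow> (nat \<Rightarrow> nat) \<Rightarrow> (nat \<Rightarrow> nat) \<Rightarrow> (nat \<times> nat \<Rightarrow> nat \<times> nat)" where
  "wreath_diag m n a k = wreath_perm m n (\<lambda>_. a) k"

lemma wreath_perm_apply [simp]:
  "wreath_perm m n g h (x, j) = (if x < m \<and> j < n then (g j x, h j) else (x, j))"
  unfolding wreath_perm_def by simp

lemma wreath_perm_restrict: "wreath_perm m n (restrict g {0..<n}) h = wreath_perm m n g h"
proof
  fix p show "wreath_perm m n (restrict g {0..<n}) h p = wreath_perm m n g h p"
    by (cases p) simp
qed

context
  fixes m n :: nat and G H :: "(nat \<Rightarrow> nat) set"
  assumes G: "perm_group {0..<m} G" and H: "perm_group {0..<n} H"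
begin

lemma wreath_perm_permutes:
  assumes g: "\<forall>j<n. g j \<in> G" and h: "h \<in> H"
  shows "wreath_perm m n g h permutes ({0..<m} \<times> {0..<n})"
proof (rule inj_imp_permutes)
  show "inj_on (wreath_perm m n g h) ({0..<m} \<times> {0..<n})"
  proof (rule inj_onI)
    fix p q
    assume dom: "p \<in> {0..<m} \<times> {0..<n}" "q \<in> {0..<m} \<times> {0..<n}"
      and eq: "wreath_perm m n g h p = wreath_perm m n g h q"
    obtain x j x' j' where pq: "p = (x, j)" "q = (x', j')" by fastforce
    have "h j = h j'" "g j x = g j' x'" using eq dom by (auto simp: pq)
    have "j = j'" using injD[OF permutes_inj[OF perm_group_permutes[OF H h]] \<open>h j = h j'\<close>] .
    moreover have "g j \<in> G" using g dom by (auto simp: pq)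
    ultimately have "x = x'" using \<open>g j x = g j' x'\<close> perm_group_permutes[OF G] permutes_inj injD by metis
    with \<open>j = j'\<close> show "p = q" by (simp add: pq)
  qed
  show "wreath_perm m n g h p \<in> {0..<m} \<times> {0..<n}" if "p \<in> {0..<m} \<times> {0..<n}" for p
    using that g h by (cases p) (simp add: perm_group_closed_lessThan[OF G] perm_group_closed_lessThan[OF H])
  show "wreath_perm m n g h p = p" if "p \<notin> {0..<m} \<times> {0..<n}" for p
    using that by (cases p) auto
qed simp

lemma wreath_permutes: "t \<in> wreath m n G H \<Longrightarrow> t permutes ({0..<m} \<times> {0..<n})"
  unfolding wreath_def using wreath_perm_permutes by blast

lemma finite_wreath: "finite (wreath m n G H)"
  by (rule finite_subset[OF _ finite_permutations]) (auto dest: wreath_permutes)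

lemma wreath_diag_in_wreath: "a \<in> G \<Longrightarrow> k \<in> H \<Longrightarrow> wreath_diag m n a k \<in> wreath m n G H"
  unfolding wreath_def wreath_diag_def by blast

lemma wreath_diag_comp_wreath_perm:
  assumes "\<forall>j<n. g j \<in> G" "h \<in> H"
  shows "wreath_diag m n a k \<circ> wreath_perm m n g h = wreath_perm m n (\<lambda>j. a \<circ> g j) (k \<circ> h)"
proof (rule ext, clarify)
  fix x j
  have "g j x < m \<and> h j < n" if "x < m" "j < n"
    using that assms perm_group_closed_lessThan[OF G] perm_group_closed_lessThan[OF H] by blast
  then show "(wreath_diag m n a k \<circ> wreath_perm m n g h) (x, j) = wreath_perm m n (\<lambda>j. a \<circ> g j) (k \<circ> h) (x, j)"
    by (simp add: wreath_diag_def)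
qed

lemma wreath_diag_comp_closed:
  assumes "a \<in> G" "k \<in> H" "t \<in> wreath m n G H"
  shows "wreath_diag m n a k \<circ> t \<in> wreath m n G H"
proof -
  obtain g h where gh: "\<forall>j<n. g j \<in> G" "h \<in> H" "t = wreath_perm m n g h"
    using assms(3) unfolding wreath_def by blast
  have "\<forall>j<n. a \<circ> g j \<in> G" "k \<circ> h \<in> H"
    using assms gh perm_group_comp[OF G] perm_group_comp[OF H] by auto
  then show ?thesis
    unfolding gh(3) wreath_diag_comp_wreath_perm[OF gh(1,2)] wreath_def by blast
qed

lemma bij_betw_wreath_diag_comp:
  assumes "a \<in> G" "k \<in> H"
  shows "bij_betw (\<lambda>t. wreath_diag m n a k \<circ> t) (wreath m n G H) (wreath m n G H)"
proof -
  have inj_diag: "inj (wreath_diag m n a k)"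
    using permutes_inj[OF wreath_permutes[OF wreath_diag_in_wreath[OF assms]]] .
  have "inj (\<lambda>t :: nat \<times> nat \<Rightarrow> nat \<times> nat. wreath_diag m n a k \<circ> t)"
  proof (rule injI, rule ext)
    fix s t :: "nat \<times> nat \<Rightarrow> nat \<times> nat" and x
    assume "wreath_diag m n a k \<circ> s = wreath_diag m n a k \<circ> t"
    then have "wreath_diag m n a k (s x) = wreath_diag m n a k (t x)" by (metis comp_apply)
    then show "s x = t x" by (rule injD[OF inj_diag])
  qed
  moreover have "(\<lambda>t. wreath_diag m n a k \<circ> t) ` wreath m n G H \<subseteq> wreath m n G H"
    using wreath_diag_comp_closed[OF assms] by blast
  ultimately show ?thesis
    unfolding bij_betw_def by (metis endo_inj_surj[OF finite_wreath] inj_on_subset subset_UNIV)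
qed

lemma sum_card_wreath_diag_translates:
  assumes "S \<subseteq> wreath m n G H"
  shows "(\<Sum>t\<in>wreath m n G H. card {p \<in> G \<times> H. wreath_diag m n (fst p) (snd p) \<circ> t \<in> S})
       = card (G \<times> H) * card S"
proof (rule sum_card_translates_in)
  show "bij_betw (\<lambda>t. wreath_diag m n (fst p) (snd p) \<circ> t) (wreath m n G H) (wreath m n G H)"
    if "p \<in> G \<times> H" for p
    using bij_betw_wreath_diag_comp that by (cases p) simp
qed (use perm_group_finite[OF G] perm_group_finite[OF H] finite_wreath assms in auto)

lemma wreath_diag_inj:
  assumes "0 < m" "0 < n" "a \<in> G" "b \<in> G" "k \<in> H" "l \<in> H"
    and eq: "wreath_diag m n a k = wreath_diag m n b l"
  shows "a = b" "k = l"
proof -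
  show "a = b"
  proof
    fix x show "a x = b x"
    proof (cases "x < m")
      case True
      then show ?thesis using fun_cong[OF eq, of "(x, 0)"] assms(2) by (simp add: wreath_diag_def)
    qed (metis perm_group_fixes[OF G] assms(3,4) atLeastLessThan_iff)
  qed
  show "k = l"
  proof
    fix j show "k j = l j"
    proof (cases "j < n")
      case True
      then show ?thesis using fun_cong[OF eq, of "(0, j)"] assms(1) by (simp add: wreath_diag_def)
    qed (metis perm_group_fixes[OF H] assms(5,6) atLeastLessThan_iff)
  qed
qed

lemma card_wreath_diag_translate_le:
  assumes "0 < m" "0 < n" "EKR {0..<m} G" "EKR {0..<n} H"
    and S: "S \<subseteq> wreath m n G H" "intersecting ({0..<m} \<times> {0..<n}) S"
    and t: "t \<in> wreath m n G H"
  shows "card {p \<in> G \<times> H. wreath_diag m n (fst p) (snd p) \<circ> t \<in> S}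
      \<le> max_stab {0..<m} G * max_stab {0..<n} H"
proof (rule card_doubly_intersecting_le[OF G _ assms(3) H _ assms(4)])
  fix a k b l
  assume ak: "(a, k) \<in> {p \<in> G \<times> H. wreath_diag m n (fst p) (snd p) \<circ> t \<in> S}"
    and bl: "(b, l) \<in> {p \<in> G \<times> H. wreath_diag m n (fst p) (snd p) \<circ> t \<in> S}"
    and "(a, k) \<noteq> (b, l)"
  have tp: "t permutes ({0..<m} \<times> {0..<n})" using wreath_permutes[OF t] .
  have mem: "a \<in> G" "k \<in> H" "b \<in> G" "l \<in> H"
    "wreath_diag m n a k \<circ> t \<in> S" "wreath_diag m n b l \<circ> t \<in> S"
    using ak bl by auto
  have "wreath_diag m n a k \<noteq> wreath_diag m n b l"
    using wreath_diag_inj[OF assms(1,2) mem(1,3,2,4)] \<open>(a, k) \<noteq> (b, l)\<close> by blast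
  then have "wreath_diag m n a k \<circ> t \<noteq> wreath_diag m n b l \<circ> t"
    by (metis comp_apply surj_fun_eq permutes_surj[OF tp])
  then have "perms_intersect ({0..<m} \<times> {0..<n}) (wreath_diag m n a k \<circ> t) (wreath_diag m n b l \<circ> t)"
    using S(2) mem(5,6) unfolding intersecting_def by blast
  moreover have "wreath_diag m n b l \<circ> t permutes ({0..<m} \<times> {0..<n})"
    using S(1) mem(6) wreath_permutes by blast
  ultimately obtain q where q: "q \<in> {0..<m} \<times> {0..<n}" "wreath_diag m n a k (t q) = wreath_diag m n b l (t q)"
    by (auto simp: perms_intersect_iff)
  obtain x i where xi: "t q = (x, i)" by fastforce
  have "(x, i) \<in> {0..<m} \<times> {0..<n}" using permutes_in_image[OF tp] q(1) xi by metis
  with q(2) xi have "a x = b x" "k i = l i" by (simp_all add: wreath_diag_def)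
  with \<open>(x, i) \<in> {0..<m} \<times> {0..<n}\<close>
  show "(\<exists>x\<in>{0..<m}. a x = b x) \<and> (\<exists>i\<in>{0..<n}. k i = l i)" by blast
qed (simp | blast)+

lemma inj_on_wreath_perm:
  assumes "0 < m"
  shows "inj_on (\<lambda>(g, h). wreath_perm m n g h) (PiE {0..<n} (\<lambda>_. G) \<times> H)"
proof (rule inj_onI, clarify)
  fix g h g' h'
  assume g: "g \<in> PiE {0..<n} (\<lambda>_. G)" "h \<in> H" and g': "g' \<in> PiE {0..<n} (\<lambda>_. G)" "h' \<in> H"
    and eq: "wreath_perm m n g h = wreath_perm m n g' h'"
  have "h = h'"
  proof
    fix j show "h j = h' j"
    proof (cases "j < n")
      case True
      then show ?thesis using fun_cong[OF eq, of "(0, j)"] assms by simp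
    next
      case False
      then show ?thesis using perm_group_fixes[OF H g(2)] perm_group_fixes[OF H g'(2)] by simp
    qed
  qed
  moreover have "g = g'"
  proof (rule PiE_ext[OF g(1) g'(1)], rule ext)
    fix j x assume j: "j \<in> {0..<n}"
    show "g j x = g' j x"
    proof (cases "x < m")
      case True
      then show ?thesis using fun_cong[OF eq, of "(x, j)"] j by simp
    next
      case False
      have "g j \<in> G" "g' j \<in> G" using g(1) g'(1) j by auto
      with False show ?thesis using perm_group_fixes[OF G] by (metis atLeastLessThan_iff)
    qed
  qed
  ultimately show "g = g' \<and> h = h'" by blast
qed

lemma wreath_eq_image:
  "wreath m n G H = (\<lambda>(g, h). wreath_perm m n g h) ` (PiE {0..<n} (\<lambda>_. G) \<times> H)"
proof (intro equalityI subsetI)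
  fix t assume "t \<in> wreath m n G H"
  then obtain g h where g: "\<forall>j<n. g j \<in> G" "h \<in> H" "t = wreath_perm m n g h"
    unfolding wreath_def by blast
  have "t = wreath_perm m n (restrict g {0..<n}) h"
    unfolding g(3) by (rule wreath_perm_restrict[symmetric])
  moreover have "(restrict g {0..<n}, h) \<in> PiE {0..<n} (\<lambda>_. G) \<times> H" using g(1,2) by auto
  ultimately show "t \<in> (\<lambda>(g, h). wreath_perm m n g h) ` (PiE {0..<n} (\<lambda>_. G) \<times> H)"
    by (metis (no_types) case_prod_conv image_eqI)
next
  fix t assume "t \<in> (\<lambda>(g, h). wreath_perm m n g h) ` (PiE {0..<n} (\<lambda>_. G) \<times> H)"
  then obtain g h where "g \<in> PiE {0..<n} (\<lambda>_. G)" "h \<in> H" "t = wreath_perm m n g h"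
    by auto
  moreover from this(1) have "\<forall>j<n. g j \<in> G" by auto
  ultimately show "t \<in> wreath m n G H" unfolding wreath_def by blast
qed

lemma card_wreath:
  assumes "0 < m"
  shows "card (wreath m n G H) = card G ^ n * card H"
proof -
  have "card (wreath m n G H) = card (PiE {0..<n} (\<lambda>_. G) \<times> H)"
    unfolding wreath_eq_image by (rule card_image[OF inj_on_wreath_perm[OF assms]])
  then show ?thesis by (simp add: card_cartesian_product card_PiE)
qed

lemma stabilizer_wreath_eq_image:
  assumes "x0 < m" "j0 < n"
  shows "stabilizer (wreath m n G H) (x0, j0)
       = (\<lambda>(g, h). wreath_perm m n g h) `
           (PiE {0..<n} (\<lambda>j. if j = j0 then stabilizer G x0 else G) \<times> stabilizer H j0)"
  (is "_ = ?\<Phi> ` (?P \<times> _)")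
proof -
  have "stabilizer (wreath m n G H) (x0, j0)
      = ?\<Phi> ` {(g, h) \<in> PiE {0..<n} (\<lambda>_. G) \<times> H. g j0 x0 = x0 \<and> h j0 = j0}"
    unfolding stabilizer_def wreath_eq_image using assms by auto
  also have "{(g, h) \<in> PiE {0..<n} (\<lambda>_. G) \<times> H. g j0 x0 = x0 \<and> h j0 = j0}
      = ?P \<times> stabilizer H j0"
    using assms(2) by (auto simp: stabilizer_def PiE_iff extensional_def split: if_splits)
  finally show ?thesis .
qed

lemma card_stabilizer_wreath:
  assumes "x0 < m" "j0 < n"
  shows "card (stabilizer (wreath m n G H) (x0, j0))
       = card (stabilizer G x0) * card G ^ (n - 1) * card (stabilizer H j0)"
proof -
  let ?P = "PiE {0..<n} (\<lambda>j. if j = j0 then stabilizer G x0 else G)"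
  have "?P \<times> stabilizer H j0 \<subseteq> PiE {0..<n} (\<lambda>_. G) \<times> H"
    by (auto simp: stabilizer_def PiE_iff split: if_splits)
  then have "card (stabilizer (wreath m n G H) (x0, j0)) = card ?P * card (stabilizer H j0)"
    unfolding stabilizer_wreath_eq_image[OF assms]
    using assms(1) by (simp add: card_image inj_on_subset[OF inj_on_wreath_perm] card_cartesian_product)
  moreover have "card ?P = card (stabilizer G x0) * card G ^ (n - 1)"
  proof -
    have "card ?P = (\<Prod>j\<in>{0..<n}. card (if j = j0 then stabilizer G x0 else G))"
      by (simp add: card_PiE)
    also have "\<dots> = card (stabilizer G x0) * (\<Prod>j\<in>{0..<n} - {j0}. card G)"
      using assms(2) by (simp add: prod.remove[of "{0..<n}" j0])
    finally show ?thesis using assms(2) by simp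
  qed
  ultimately show ?thesis by simp
qed

lemma card_wreath_mult_stabilizers:
  assumes "x0 < m" "j0 < n"
  shows "card (wreath m n G H) * (card (stabilizer G x0) * card (stabilizer H j0))
       = card (G \<times> H) * card (stabilizer (wreath m n G H) (x0, j0))"
proof -
  have "0 < m" using assms(1) by simp
  have "card G ^ n = card G * card G ^ (n - 1)" using assms(2) by (simp add: power_eq_if)
  then show ?thesis
    unfolding card_wreath[OF \<open>0 < m\<close>] card_stabilizer_wreath[OF assms] card_cartesian_product
    by (simp only: ac_simps)
qed

end

theorem theorem25:
  fixes m n :: nat and G H :: "(nat \<Rightarrow> nat) set"
  assumes "perm_group {0..<m} G" and "perm_group {0..<n} H"
    and "EKR {0..<m} G" and "EKR {0..<n} H"
  shows "EKR ({0..<m} \<times> {0..<n}) (wreath m n G H)"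
  unfolding EKR_def
proof (intro allI impI)
  let ?W = "wreath m n G H"
  fix S assume S: "S \<subseteq> ?W" "intersecting ({0..<m} \<times> {0..<n}) S"
  have ne: "{0..<m} \<noteq> {}" "{0..<n} \<noteq> {}"
    using EKR_domain_nonempty[OF assms(1,3)] EKR_domain_nonempty[OF assms(2,4)] .
  then have mn: "0 < m" "0 < n" by simp_all
  obtain x0 where x0: "x0 \<in> {0..<m}" "max_stab {0..<m} G = card (stabilizer G x0)"
    using max_stab_attained[OF finite_atLeastLessThan ne(1)] .
  obtain j0 where j0: "j0 \<in> {0..<n}" "max_stab {0..<n} H = card (stabilizer H j0)"
    using max_stab_attained[OF finite_atLeastLessThan ne(2)] .
  have "card (G \<times> H) * card S
      = (\<Sum>t\<in>?W. card {p \<in> G \<times> H. wreath_diag m n (fst p) (snd p) \<circ> t \<in> S})"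
    using sum_card_wreath_diag_translates[OF assms(1,2) S(1)] by simp
  also have "\<dots> \<le> (\<Sum>t\<in>?W. max_stab {0..<m} G * max_stab {0..<n} H)"
    by (rule sum_mono) (rule card_wreath_diag_translate_le[OF assms(1,2) mn assms(3,4) S])
  also have "\<dots> = card (G \<times> H) * card (stabilizer ?W (x0, j0))"
    using card_wreath_mult_stabilizers[OF assms(1,2)] x0 j0 by simp
  finally have "card S \<le> card (stabilizer ?W (x0, j0))"
    using perm_group_finite[OF assms(1)] perm_group_finite[OF assms(2)]
      perm_group_nonempty[OF assms(1)] perm_group_nonempty[OF assms(2)]
    by (simp add: card_gt_0_iff)
  also have "\<dots> \<le> max_stab ({0..<m} \<times> {0..<n}) ?W"
    using x0(1) j0(1) by (intro card_stabilizer_le_max_stab) auto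
  finally show "card S \<le> max_stab ({0..<m} \<times> {0..<n}) ?W" .
qed

end
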